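(* Let $0<\gamma\le1$, $0<\delta<1$, $\delta<\alpha<1$, $\Lambda_1=(0,1)$, and $P_\delta(t,z)=\frac{1}{\Gamma(1-\delta)}(t^{1/\gamma}-z^{1/\gamma})^{-\delta}$ for $0<z<t$. Let $\omega_1(t)=(1-t)^{\alpha/2}t^{1/\gamma-1/2}$ and $\omega_2(t)=(1-t)^{(1-\alpha)/2}$ for $t\in\Lambda_1$. Then for any differentiable function $v$ on $\Lambda_1$, $$\int_{\Lambda_1}\big|\omega_1(t)(P_\delta v')(t)\big|^2dt\le c\int_{\Lambda_1}\big|\omega_2(t)v'(t)\big|^2dt,$$ where $(P_\delta v')(t)=\int_0^tP_\delta(t,z)v'(z)\,dz$ and $c$ is independent of $v$. *)

theory Defs
  imports "HOL-Analysis.Analysis"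
begin

definition P_kernel :: "real \<Rightarrow> real \<Rightarrow> real \<Rightarrow> real \<Rightarrow> real" where
  "P_kernel \<gamma> \<delta> t z = (t powr (1/\<gamma>) - z powr (1/\<gamma>)) powr (-\<delta>) / Gamma (1 - \<delta>)"

definition P_op :: "real \<Rightarrow> real \<Rightarrow> (real \<Rightarrow> real) \<Rightarrow> real \<Rightarrow> real" where
  "P_op \<gamma> \<delta> w t = (LINT z:{0<..<t}|lborel. P_kernel \<gamma> \<delta> t z * w z)"

definition omega1 :: "real \<Rightarrow> real \<Rightarrow> real \<Rightarrow> real" where
  "omega1 \<gamma> \<alpha> t = (1 - t) powr (\<alpha>/2) * t powr (1/\<gamma> - 1/2)"

definition omega2 :: "real \<Rightarrow> real \<Rightarrow> real" where
  "omega2 \<alpha> t = (1 - t) powr ((1 - \<alpha>)/2)"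

end

theory Submission
  imports Defs
begin

text \<open>
  Put \<open>p = 1/\<gamma> \<ge> 1\<close>. Since \<open>t\<^sup>p - z\<^sup>p \<ge> t\<^bsup>p-1\<^esup>(t - z)\<close>, the kernel is bounded by
  \<open>t\<^bsup>-(p-1)\<delta>\<^esup> (t - z)\<^bsup>-\<delta>\<^esup> / \<Gamma>(1 - \<delta>)\<close>, and the factor \<open>t\<^bsup>-(p-1)\<delta>\<^esup>\<close> is absorbed by \<open>\<omega>\<^sub>1\<close>.
  Hence \<open>\<Gamma>(1 - \<delta>) \<omega>\<^sub>1 |P\<^sub>\<delta> v'|\<close> is dominated by the Abel integral
  \<open>A(t) = \<integral>\<^sub>0\<^sup>t (t - z)\<^bsup>-\<delta>\<^esup> |v'(z)| dz\<close>. Cauchy-Schwarz with the splitting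
  \<open>(t - z)\<^bsup>-\<delta>\<^esup> = [(t - z)\<^bsup>-\<delta>\<^esup>(1 - z)\<^bsup>\<alpha>-1\<^esup>]\<^bsup>1/2\<^esup> [(t - z)\<^bsup>-\<delta>\<^esup>(1 - z)\<^bsup>1-\<alpha>\<^esup>]\<^bsup>1/2\<^esup>\<close>
  costs the factor \<open>\<integral>\<^sub>0\<^sup>t (t - z)\<^bsup>\<alpha>-\<delta>-1\<^esup> dz \<le> 1/(\<alpha> - \<delta>)\<close>, and Tonelli together with
  \<open>\<integral>\<^sub>z\<^sup>1 (t - z)\<^bsup>-\<delta>\<^esup> dt \<le> 1/(1 - \<delta>)\<close> turns \<open>\<integral>\<^sub>0\<^sup>1 A\<^sup>2\<close> into the \<open>\<omega>\<^sub>2\<close>-weighted norm of \<open>v'\<close>, giving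
  \<open>c = 1/((\<alpha> - \<delta>)(1 - \<delta>)\<Gamma>(1 - \<delta>)\<^sup>2)\<close>. The same estimate makes \<open>A(t)\<close> finite for almost
  every \<open>t\<close>, which yields the integrability of the kernel against \<open>v'\<close>.
\<close>

lemma nn_integral_powr_from_left_le:
  fixes a c d :: real
  assumes "-1 < a" "c \<le> d"
  shows "(\<integral>\<^sup>+x\<in>{c<..<d}. ennreal ((x - c) powr a) \<partial>lborel) \<le> ennreal ((d - c) powr (a + 1) / (a + 1))"
proof -
  have "(\<integral>\<^sup>+x\<in>{c<..<d}. ennreal ((x - c) powr a) \<partial>lborel)
      = (\<integral>\<^sup>+x. ennreal (((c + 1 * x) - c) powr a) * indicator {c<..<d} (c + 1 * x) \<partial>lborel)"
    by (subst nn_integral_real_affine[where c=1 and t=c]) auto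
  also have "\<dots> \<le> (\<integral>\<^sup>+x\<in>{0..d - c}. ennreal (x powr a) \<partial>lborel)"
    by (intro nn_integral_mono) (auto simp: indicator_def)
  also have "\<dots> = ennreal ((d - c) powr (a + 1) / (a + 1))"
    using assms by (intro nn_integral_has_integral_lebesgue' has_integral_powr_from_0) auto
  finally show ?thesis .
qed

lemma nn_integral_powr_to_right_le:
  fixes a c d :: real
  assumes "-1 < a" "c \<le> d"
  shows "(\<integral>\<^sup>+x\<in>{c<..<d}. ennreal ((d - x) powr a) \<partial>lborel) \<le> ennreal ((d - c) powr (a + 1) / (a + 1))"
proof -
  have "(\<integral>\<^sup>+x\<in>{c<..<d}. ennreal ((d - x) powr a) \<partial>lborel)
      = (\<integral>\<^sup>+x. ennreal ((d - (d + (-1) * x)) powr a) * indicator {c<..<d} (d + (-1) * x) \<partial>lborel)"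
    by (subst nn_integral_real_affine[where c="-1" and t=d]) auto
  also have "\<dots> \<le> (\<integral>\<^sup>+x\<in>{0..d - c}. ennreal (x powr a) \<partial>lborel)"
    by (intro nn_integral_mono) (auto simp: indicator_def)
  also have "\<dots> = ennreal ((d - c) powr (a + 1) / (a + 1))"
    using assms by (intro nn_integral_has_integral_lebesgue' has_integral_powr_from_0) auto
  finally show ?thesis .
qed

lemma norm_set_integral_le_set_nn_integral:
  fixes f :: "'a \<Rightarrow> 'b::{banach, second_countable_topology}"
  shows "ennreal (norm (LINT x:A|M. f x)) \<le> (\<integral>\<^sup>+x\<in>A. ennreal (norm (f x)) \<partial>M)"
proof (cases "set_integrable M A f")
  case True
  then have "ennreal (norm (LINT x:A|M. f x)) \<le> (\<integral>\<^sup>+x. ennreal (norm (indicator A x *\<^sub>R f x)) \<partial>M)"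
    unfolding set_lebesgue_integral_def set_integrable_def by (rule integral_norm_bound_ennreal)
  also have "\<dots> = (\<integral>\<^sup>+x\<in>A. ennreal (norm (f x)) \<partial>M)"
    by (intro nn_integral_cong) (simp add: indicator_def)
  finally show ?thesis .
next
  case False
  then show ?thesis
    by (simp add: set_lebesgue_integral_def set_integrable_def not_integrable_integral_eq)
qed

lemma set_borel_measurable_derivative:
  fixes v v' :: "real \<Rightarrow> real"
  assumes v: "\<forall>t\<in>{a<..<b}. (v has_real_derivative v' t) (at t)"
  shows "set_borel_measurable borel {a<..<b} v'"
proof -
  define V where "V = (\<lambda>x. indicator {a<..<b} x * v x)"
  have [measurable]: "V \<in> borel_measurable borel"
  proof -
    have "continuous_on {a<..<b} v"
      using v by (intro has_real_derivative_imp_continuous_on) auto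
    then show ?thesis
      using borel_measurable_continuous_on_indicator[of "{a<..<b}" v] by (simp add: V_def)
  qed
  define h :: "nat \<Rightarrow> real" where "h n = 1 / Suc n" for n
  have h_pos: "0 < h n" for n
    by (simp add: h_def)
  have h: "h \<longlonglongrightarrow> 0"
    unfolding h_def using LIMSEQ_inverse_real_of_nat by (simp add: inverse_eq_divide)
  then have h_at: "filterlim h (at 0) sequentially"
    using h_pos by (intro filterlim_atI) (auto simp: order_less_imp_not_eq2)
  show ?thesis
    unfolding set_borel_measurable_def
  proof (rule borel_measurable_LIMSEQ_real)
    fix x :: real
    show "(\<lambda>n. indicator {a<..<b} x * ((V (x + h n) - V x) / h n)) \<longlonglongrightarrow> indicator {a<..<b} x *\<^sub>R v' x"
    proof (cases "x \<in> {a<..<b}")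
      case True
      have "((\<lambda>d. (v (x + d) - v x) / d) \<longlongrightarrow> v' x) (at 0)"
        using v True by (simp add: DERIV_def)
      then have "(\<lambda>n. (v (x + h n) - v x) / h n) \<longlonglongrightarrow> v' x"
        using h_at by (rule filterlim_compose)
      moreover have "\<forall>\<^sub>F n in sequentially. h n < b - x"
        using h True unfolding order_tendsto_iff by auto
      then have "\<forall>\<^sub>F n in sequentially. (v (x + h n) - v x) / h n = indicator {a<..<b} x * ((V (x + h n) - V x) / h n)"
      proof eventually_elim
        case (elim n)
        then have "x + h n \<in> {a<..<b}"
          using True h_pos[of n] by simp
        then show ?case
          using True by (simp add: V_def)
      qed
      ultimately show ?thesis
        using True by (auto intro: Lim_transform_eventually)
    qed simp
  qed measurable
qed

lemma powr_diff_powr_ge: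
  fixes p t z :: real
  assumes "1 \<le> p" "0 < z" "z \<le> t"
  shows "t powr (p - 1) * (t - z) \<le> t powr p - z powr p"
proof -
  have "z * z powr (p - 1) \<le> z * t powr (p - 1)"
    using assms by (intro mult_left_mono powr_mono2) auto
  moreover have "t powr p = t * t powr (p - 1)" "z powr p = z * z powr (p - 1)"
    using assms by (simp_all add: powr_mult_base)
  ultimately show ?thesis
    by (simp add: algebra_simps)
qed

lemma P_kernel_le:
  assumes "0 < \<gamma>" "\<gamma> \<le> 1" "0 \<le> \<delta>" "\<delta> < 1" "0 < z" "z < t"
  shows "P_kernel \<gamma> \<delta> t z \<le> t powr (-(1/\<gamma> - 1) * \<delta>) * (t - z) powr (-\<delta>) / Gamma (1 - \<delta>)"
proof -
  have "(t powr (1/\<gamma>) - z powr (1/\<gamma>)) powr (-\<delta>) \<le> (t powr (1/\<gamma> - 1) * (t - z)) powr (-\<delta>)"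
    using assms by (intro powr_mono2' powr_diff_powr_ge) auto
  also have "\<dots> = t powr (-(1/\<gamma> - 1) * \<delta>) * (t - z) powr (-\<delta>)"
    using assms by (simp add: powr_mult powr_powr) (simp add: algebra_simps)
  finally show ?thesis
    using assms unfolding P_kernel_def by (intro divide_right_mono Gamma_real_pos) auto
qed

lemma P_kernel_nonneg: "0 \<le> \<delta> \<Longrightarrow> \<delta> < 1 \<Longrightarrow> 0 \<le> P_kernel \<gamma> \<delta> t z"
  unfolding P_kernel_def by (simp add: Gamma_real_pos less_imp_le)

lemma omega1_mult_powr_le_1:
  assumes "0 < \<gamma>" "\<gamma> \<le> 1" "\<delta> \<le> 1" "0 \<le> \<alpha>" "0 < t" "t \<le> 1"
  shows "omega1 \<gamma> \<alpha> t * t powr (-(1/\<gamma> - 1) * \<delta>) \<le> 1"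
proof -
  have "(1/\<gamma> - 1/2) + (-(1/\<gamma> - 1) * \<delta>) = (1/\<gamma> - 1) * (1 - \<delta>) + 1/2"
    by (simp add: algebra_simps diff_divide_distrib)
  then have "t powr (1/\<gamma> - 1/2) * t powr (-(1/\<gamma> - 1) * \<delta>) = t powr ((1/\<gamma> - 1) * (1 - \<delta>) + 1/2)"
    by (simp only: powr_add[symmetric])
  also have "\<dots> \<le> 1"
    using assms by (intro powr_le1) auto
  finally have "t powr (1/\<gamma> - 1/2) * t powr (-(1/\<gamma> - 1) * \<delta>) \<le> 1" .
  moreover have "(1 - t) powr (\<alpha>/2) \<le> 1"
    using assms by (intro powr_le1) auto
  ultimately show ?thesis
    unfolding omega1_def by (simp add: mult.assoc mult_le_one)
qed

lemma omega1_P_kernel_le: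
  assumes "0 < \<gamma>" "\<gamma> \<le> 1" "0 \<le> \<delta>" "\<delta> < 1" "0 \<le> \<alpha>" "0 < z" "z < t" "t \<le> 1"
  shows "omega1 \<gamma> \<alpha> t * P_kernel \<gamma> \<delta> t z \<le> (t - z) powr (-\<delta>) / Gamma (1 - \<delta>)"
proof -
  have "omega1 \<gamma> \<alpha> t * P_kernel \<gamma> \<delta> t z
      \<le> omega1 \<gamma> \<alpha> t * (t powr (-(1/\<gamma> - 1) * \<delta>) * (t - z) powr (-\<delta>) / Gamma (1 - \<delta>))"
    using assms by (intro mult_left_mono P_kernel_le) (auto simp: omega1_def)
  also have "\<dots> = (omega1 \<gamma> \<alpha> t * t powr (-(1/\<gamma> - 1) * \<delta>)) * ((t - z) powr (-\<delta>) / Gamma (1 - \<delta>))"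
    by simp
  also have "\<dots> \<le> (t - z) powr (-\<delta>) / Gamma (1 - \<delta>)"
    using assms omega1_mult_powr_le_1[of \<gamma> \<delta> \<alpha> t]
    by (intro mult_left_le_one_le) (auto simp: omega1_def Gamma_real_pos less_imp_le)
  finally show ?thesis .
qed

text \<open>The function \<open>A\<close> of the proof idea; it is \<open>ennreal\<close>-valued so that it needs no integrability hypothesis.\<close>

definition abel_majorant :: "real \<Rightarrow> (real \<Rightarrow> real) \<Rightarrow> real \<Rightarrow> ennreal" where
  "abel_majorant \<delta> w t = (\<integral>\<^sup>+z\<in>{0<..<t}. ennreal ((t - z) powr (-\<delta>) * \<bar>w z\<bar>) \<partial>lborel)"

lemma borel_measurable_abel_majorant [measurable]:
  assumes [measurable]: "w \<in> borel_measurable borel"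
  shows "abel_majorant \<delta> w \<in> borel_measurable borel"
proof -
  have "abel_majorant \<delta> w = (\<lambda>t. \<integral>\<^sup>+z. ennreal (if 0 < z \<and> z < t then (t - z) powr (-\<delta>) * \<bar>w z\<bar> else 0) \<partial>lborel)"
    unfolding abel_majorant_def by (intro ext nn_integral_cong) (simp add: indicator_def)
  also have "\<dots> \<in> borel_measurable borel"
    using lborel.borel_measurable_nn_integral[of "\<lambda>t z. ennreal (if 0 < z \<and> z < t then (t - z) powr (-\<delta>) * \<bar>w z\<bar> else 0)"]
    by simp
  finally show ?thesis .
qed

lemma nn_integral_abel_weight_le:
  assumes "\<delta> < \<alpha>" "\<alpha> \<le> 1" "0 < t" "t \<le> 1"
  shows "(\<integral>\<^sup>+z\<in>{0<..<t}. ennreal ((t - z) powr (-\<delta>) * (1 - z) powr (\<alpha> - 1)) \<partial>lborel) \<le> ennreal (1 / (\<alpha> - \<delta>))"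
proof -
  have "(\<integral>\<^sup>+z\<in>{0<..<t}. ennreal ((t - z) powr (-\<delta>) * (1 - z) powr (\<alpha> - 1)) \<partial>lborel)
      \<le> (\<integral>\<^sup>+z\<in>{0<..<t}. ennreal ((t - z) powr (-\<delta> + (\<alpha> - 1))) \<partial>lborel)"
  proof (intro nn_integral_mono)
    fix z
    have "ennreal ((t - z) powr (-\<delta>) * (1 - z) powr (\<alpha> - 1)) \<le> ennreal ((t - z) powr (-\<delta> + (\<alpha> - 1)))"
      if "z \<in> {0<..<t}"
    proof (rule ennreal_leI)
      have "(t - z) powr (-\<delta>) * (1 - z) powr (\<alpha> - 1) \<le> (t - z) powr (-\<delta>) * (t - z) powr (\<alpha> - 1)"
        using assms that by (intro mult_left_mono powr_mono2') auto
      then show "(t - z) powr (-\<delta>) * (1 - z) powr (\<alpha> - 1) \<le> (t - z) powr (-\<delta> + (\<alpha> - 1))"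
        by (simp only: powr_add)
    qed
    then show "ennreal ((t - z) powr (-\<delta>) * (1 - z) powr (\<alpha> - 1)) * indicator {0<..<t} z
        \<le> ennreal ((t - z) powr (-\<delta> + (\<alpha> - 1))) * indicator {0<..<t} z"
      by (cases "z \<in> {0<..<t}") simp_all
  qed
  also have "\<dots> \<le> ennreal ((t - 0) powr (-\<delta> + (\<alpha> - 1) + 1) / (-\<delta> + (\<alpha> - 1) + 1))"
    using assms by (intro nn_integral_powr_to_right_le) auto
  also have "\<dots> \<le> ennreal (1 / (\<alpha> - \<delta>))"
    using assms powr_le1[of "\<alpha> - \<delta>" t] by (intro ennreal_leI) (simp add: divide_right_mono)
  finally show ?thesis .
qed

lemma abel_majorant_square_le:
  assumes [measurable]: "w \<in> borel_measurable borel"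
    and "\<delta> < \<alpha>" "\<alpha> \<le> 1" "0 < t" "t \<le> 1"
  shows "abel_majorant \<delta> w t ^ 2 \<le> ennreal (1 / (\<alpha> - \<delta>)) *
           (\<integral>\<^sup>+z\<in>{0<..<t}. ennreal ((t - z) powr (-\<delta>)) * ennreal ((1 - z) powr (1 - \<alpha>) * (w z)\<^sup>2) \<partial>lborel)"
proof -
  define f where "f = (\<lambda>z. ennreal (sqrt ((t - z) powr (-\<delta>) * (1 - z) powr (\<alpha> - 1))) * indicator {0<..<t} z)"
  define g where "g = (\<lambda>z. ennreal (sqrt ((t - z) powr (-\<delta>) * (1 - z) powr (1 - \<alpha>)) * \<bar>w z\<bar>) * indicator {0<..<t} z)"
  have [measurable]: "f \<in> borel_measurable borel" "g \<in> borel_measurable borel"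
    unfolding f_def g_def by measurable
  have abel_eq: "abel_majorant \<delta> w t = (\<integral>\<^sup>+z. f z * g z \<partial>lborel)"
    unfolding abel_majorant_def
  proof (intro nn_integral_cong)
    fix z
    show "ennreal ((t - z) powr (-\<delta>) * \<bar>w z\<bar>) * indicator {0<..<t} z = f z * g z"
    proof (cases "z \<in> {0<..<t}")
      case True
      then have "(1 - z) powr (\<alpha> - 1) * (1 - z) powr (1 - \<alpha>) = 1"
        using assms by (simp add: powr_add[symmetric])
      then have "sqrt ((t - z) powr (-\<delta>) * (1 - z) powr (\<alpha> - 1)) * sqrt ((t - z) powr (-\<delta>) * (1 - z) powr (1 - \<alpha>))
          = (t - z) powr (-\<delta>)"
        by (simp add: real_sqrt_mult[symmetric] algebra_simps)
      then show ?thesis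
        using True by (simp add: f_def g_def ennreal_mult[symmetric] mult.assoc)
    qed (simp add: f_def g_def)
  qed
  have f_square: "(\<integral>\<^sup>+z. f z ^ 2 \<partial>lborel) \<le> ennreal (1 / (\<alpha> - \<delta>))"
  proof -
    have "(\<integral>\<^sup>+z. f z ^ 2 \<partial>lborel) = (\<integral>\<^sup>+z\<in>{0<..<t}. ennreal ((t - z) powr (-\<delta>) * (1 - z) powr (\<alpha> - 1)) \<partial>lborel)"
      by (intro nn_integral_cong) (simp add: f_def ennreal_power indicator_def)
    then show ?thesis
      using nn_integral_abel_weight_le[OF assms(2-5)] by simp
  qed
  have g_square: "(\<integral>\<^sup>+z. g z ^ 2 \<partial>lborel)
      = (\<integral>\<^sup>+z\<in>{0<..<t}. ennreal ((t - z) powr (-\<delta>)) * ennreal ((1 - z) powr (1 - \<alpha>) * (w z)\<^sup>2) \<partial>lborel)"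
    by (intro nn_integral_cong)
       (auto simp: g_def indicator_def ennreal_power ennreal_mult[symmetric] power_mult_distrib mult.assoc)
  have "abel_majorant \<delta> w t ^ 2 \<le> (\<integral>\<^sup>+z. f z ^ 2 \<partial>lborel) * (\<integral>\<^sup>+z. g z ^ 2 \<partial>lborel)"
    unfolding abel_eq by (rule Cauchy_Schwarz_nn_integral) measurable
  also have "\<dots> \<le> ennreal (1 / (\<alpha> - \<delta>)) * (\<integral>\<^sup>+z. g z ^ 2 \<partial>lborel)"
    using f_square by (rule mult_right_mono) simp
  finally show ?thesis
    unfolding g_square .
qed

lemma nn_integral_abel_kernel_le:
  fixes g :: "real \<Rightarrow> ennreal"
  assumes [measurable]: "g \<in> borel_measurable borel" and "\<delta> < 1"
  shows "(\<integral>\<^sup>+t\<in>{0<..<1}. (\<integral>\<^sup>+z\<in>{0<..<t}. ennreal ((t - z) powr (-\<delta>)) * g z \<partial>lborel) \<partial>lborel)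
           \<le> ennreal (1 / (1 - \<delta>)) * (\<integral>\<^sup>+z\<in>{0<..<1}. g z \<partial>lborel)"
proof -
  define F where "F t z = (if 0 < z \<and> z < t \<and> t < 1 then ennreal ((t - z) powr (-\<delta>)) * g z else 0)" for t z
  have F_measurable: "(\<lambda>(z, t). F t z) \<in> borel_measurable (lborel \<Otimes>\<^sub>M lborel)"
    unfolding F_def by measurable
  have "(\<integral>\<^sup>+z\<in>{0<..<t}. ennreal ((t - z) powr (-\<delta>)) * g z \<partial>lborel) * indicator {0<..<1} t
      = (\<integral>\<^sup>+z. F t z \<partial>lborel)" for t
  proof (cases "t \<in> {0<..<1}")
    case True
    then show ?thesis
      by (auto simp: F_def indicator_def intro!: nn_integral_cong)
  next
    case False
    then have "F t = (\<lambda>z. 0)"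
      by (auto simp: F_def fun_eq_iff)
    then show ?thesis
      using False by simp
  qed
  then have "(\<integral>\<^sup>+t\<in>{0<..<1}. (\<integral>\<^sup>+z\<in>{0<..<t}. ennreal ((t - z) powr (-\<delta>)) * g z \<partial>lborel) \<partial>lborel)
      = (\<integral>\<^sup>+t. (\<integral>\<^sup>+z. F t z \<partial>lborel) \<partial>lborel)"
    by simp
  also have "\<dots> = (\<integral>\<^sup>+z. (\<integral>\<^sup>+t. F t z \<partial>lborel) \<partial>lborel)"
    using lborel_pair.Fubini'[OF F_measurable] by simp
  also have "\<dots> \<le> (\<integral>\<^sup>+z. ennreal (1 / (1 - \<delta>)) * (g z * indicator {0<..<1} z) \<partial>lborel)"
  proof (intro nn_integral_mono)
    fix z
    show "(\<integral>\<^sup>+t. F t z \<partial>lborel) \<le> ennreal (1 / (1 - \<delta>)) * (g z * indicator {0<..<1} z)"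
    proof (cases "z \<in> {0<..<1}")
      case True
      have "(\<integral>\<^sup>+t. F t z \<partial>lborel) = g z * (\<integral>\<^sup>+t\<in>{z<..<1}. ennreal ((t - z) powr (-\<delta>)) \<partial>lborel)"
        using True by (subst nn_integral_cmult[symmetric]) (auto simp: F_def indicator_def mult_ac intro!: nn_integral_cong)
      also have "\<dots> \<le> g z * ennreal ((1 - z) powr (-\<delta> + 1) / (-\<delta> + 1))"
        using True assms by (intro mult_left_mono nn_integral_powr_from_left_le) auto
      also have "\<dots> \<le> g z * ennreal (1 / (1 - \<delta>))"
        using True assms powr_le1[of "1 - \<delta>" "1 - z"]
        by (intro mult_left_mono ennreal_leI) (simp_all add: divide_right_mono)
      finally show ?thesis
        using True by (simp add: mult.commute)
    next
      case False
      then have "F t z = 0" for t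
        by (auto simp: F_def)
      then show ?thesis
        using False by simp
    qed
  qed
  also have "\<dots> = ennreal (1 / (1 - \<delta>)) * (\<integral>\<^sup>+z\<in>{0<..<1}. g z \<partial>lborel)"
    by (rule nn_integral_cmult) measurable
  finally show ?thesis .
qed

lemma abel_majorant_weighted_L2_le:
  assumes [measurable]: "w \<in> borel_measurable borel"
    and "\<delta> < \<alpha>" "\<alpha> \<le> 1"
  shows "(\<integral>\<^sup>+t\<in>{0<..<1}. abel_majorant \<delta> w t ^ 2 \<partial>lborel)
           \<le> ennreal (1 / ((\<alpha> - \<delta>) * (1 - \<delta>))) * (\<integral>\<^sup>+z\<in>{0<..<1}. ennreal ((1 - z) powr (1 - \<alpha>) * (w z)\<^sup>2) \<partial>lborel)"
proof -
  define g where "g z = ennreal (1 / (\<alpha> - \<delta>)) * ennreal ((1 - z) powr (1 - \<alpha>) * (w z)\<^sup>2)" for z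
  have [measurable]: "g \<in> borel_measurable borel"
    unfolding g_def[abs_def] by measurable
  have g_integral: "(\<integral>\<^sup>+z\<in>{0<..<1}. g z \<partial>lborel)
      = ennreal (1 / (\<alpha> - \<delta>)) * (\<integral>\<^sup>+z\<in>{0<..<1}. ennreal ((1 - z) powr (1 - \<alpha>) * (w z)\<^sup>2) \<partial>lborel)"
    unfolding g_def mult.assoc by (rule nn_integral_cmult) measurable
  have "(\<integral>\<^sup>+t\<in>{0<..<1}. abel_majorant \<delta> w t ^ 2 \<partial>lborel)
      \<le> (\<integral>\<^sup>+t\<in>{0<..<1}. (\<integral>\<^sup>+z\<in>{0<..<t}. ennreal ((t - z) powr (-\<delta>)) * g z \<partial>lborel) \<partial>lborel)"
  proof (intro nn_integral_mono)
    fix t :: real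
    show "abel_majorant \<delta> w t ^ 2 * indicator {0<..<1} t
        \<le> (\<integral>\<^sup>+z\<in>{0<..<t}. ennreal ((t - z) powr (-\<delta>)) * g z \<partial>lborel) * indicator {0<..<1} t"
    proof (cases "t \<in> {0<..<1}")
      case True
      have "abel_majorant \<delta> w t ^ 2 \<le> ennreal (1 / (\<alpha> - \<delta>)) *
          (\<integral>\<^sup>+z\<in>{0<..<t}. ennreal ((t - z) powr (-\<delta>)) * ennreal ((1 - z) powr (1 - \<alpha>) * (w z)\<^sup>2) \<partial>lborel)"
        using True assms by (intro abel_majorant_square_le) auto
      also have "\<dots> = (\<integral>\<^sup>+z\<in>{0<..<t}. ennreal ((t - z) powr (-\<delta>)) * g z \<partial>lborel)"
        by (subst nn_integral_cmult[symmetric]) (simp_all add: g_def mult_ac)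
      finally show ?thesis
        using True by simp
    qed simp
  qed
  also have "\<dots> \<le> ennreal (1 / (1 - \<delta>)) * (\<integral>\<^sup>+z\<in>{0<..<1}. g z \<partial>lborel)"
    using assms by (intro nn_integral_abel_kernel_le) auto
  also have "\<dots> = ennreal (1 / ((\<alpha> - \<delta>) * (1 - \<delta>))) *
      (\<integral>\<^sup>+z\<in>{0<..<1}. ennreal ((1 - z) powr (1 - \<alpha>) * (w z)\<^sup>2) \<partial>lborel)"
  proof -
    have "ennreal (1 / ((\<alpha> - \<delta>) * (1 - \<delta>))) = ennreal (1 / (1 - \<delta>)) * ennreal (1 / (\<alpha> - \<delta>))"
      using assms by (simp add: ennreal_mult[symmetric])
    then show ?thesis
      by (simp add: g_integral mult.assoc)
  qed
  finally show ?thesis .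
qed

lemma set_integrable_P_kernel:
  assumes "0 < \<gamma>" "\<gamma> \<le> 1" "0 \<le> \<delta>" "\<delta> < 1"
    and [measurable]: "w \<in> borel_measurable borel"
    and finite: "abel_majorant \<delta> w t < \<infinity>"
  shows "set_integrable lborel {0<..<t} (\<lambda>z. P_kernel \<gamma> \<delta> t z * w z)"
proof -
  have "set_integrable lborel {0<..<t} (\<lambda>z. (t - z) powr (-\<delta>) * w z)"
    unfolding set_integrable_def
  proof (rule integrableI_bounded)
    have "(\<integral>\<^sup>+z. ennreal (norm (indicator {0<..<t} z *\<^sub>R ((t - z) powr (-\<delta>) * w z))) \<partial>lborel) = abel_majorant \<delta> w t"
      unfolding abel_majorant_def by (intro nn_integral_cong) (auto simp: indicator_def abs_mult)
    then show "(\<integral>\<^sup>+z. ennreal (norm (indicator {0<..<t} z *\<^sub>R ((t - z) powr (-\<delta>) * w z))) \<partial>lborel) < \<infinity>"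
      using finite by simp
  qed measurable
  then have "set_integrable lborel {0<..<t} (\<lambda>z. t powr (-(1/\<gamma> - 1) * \<delta>) / Gamma (1 - \<delta>) * ((t - z) powr (-\<delta>) * w z))"
    by simp
  then show ?thesis
  proof (rule set_integrable_bound)
    show "set_borel_measurable lborel {0<..<t} (\<lambda>z. P_kernel \<gamma> \<delta> t z * w z)"
      unfolding set_borel_measurable_def P_kernel_def by measurable
    show "AE z in lborel. z \<in> {0<..<t} \<longrightarrow>
        norm (P_kernel \<gamma> \<delta> t z * w z) \<le> norm (t powr (-(1/\<gamma> - 1) * \<delta>) / Gamma (1 - \<delta>) * ((t - z) powr (-\<delta>) * w z))"
    proof (intro AE_I2 impI)
      fix z
      assume "z \<in> {0<..<t}"
      then have "P_kernel \<gamma> \<delta> t z * \<bar>w z\<bar> \<le> t powr (-(1/\<gamma> - 1) * \<delta>) * (t - z) powr (-\<delta>) / Gamma (1 - \<delta>) * \<bar>w z\<bar>"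
        using assms by (intro mult_right_mono P_kernel_le) auto
      then show "norm (P_kernel \<gamma> \<delta> t z * w z) \<le> norm (t powr (-(1/\<gamma> - 1) * \<delta>) / Gamma (1 - \<delta>) * ((t - z) powr (-\<delta>) * w z))"
        using assms P_kernel_nonneg[OF assms(3,4)] by (simp add: abs_mult Gamma_real_pos less_imp_le)
    qed
  qed
qed

lemma AE_set_integrable_P_kernel:
  assumes "0 < \<gamma>" "\<gamma> \<le> 1" "0 \<le> \<delta>" "\<delta> < 1"
    and [measurable]: "w \<in> borel_measurable borel"
    and finite: "(\<integral>\<^sup>+t\<in>{0<..<1}. abel_majorant \<delta> w t ^ 2 \<partial>lborel) < \<infinity>"
  shows "AE t in lborel. t \<in> {0<..<1} \<longrightarrow> set_integrable lborel {0<..<t} (\<lambda>z. P_kernel \<gamma> \<delta> t z * w z)"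
proof -
  have "AE t in lborel. abel_majorant \<delta> w t ^ 2 * indicator {0<..<1} t \<noteq> \<infinity>"
    using finite by (intro nn_integral_PInf_AE) auto
  then show ?thesis
  proof eventually_elim
    case (elim t)
    show ?case
    proof
      assume "t \<in> {0<..<1}"
      then have "abel_majorant \<delta> w t < \<infinity>"
        using elim by (simp add: less_top power_less_top_ennreal)
      then show "set_integrable lborel {0<..<t} (\<lambda>z. P_kernel \<gamma> \<delta> t z * w z)"
        using assms by (intro set_integrable_P_kernel) auto
    qed
  qed
qed

lemma Gamma_omega1_P_op_le:
  assumes "0 < \<gamma>" "\<gamma> \<le> 1" "0 \<le> \<delta>" "\<delta> < 1" "0 \<le> \<alpha>" "t \<le> 1"
  shows "ennreal (Gamma (1 - \<delta>) * \<bar>omega1 \<gamma> \<alpha> t * P_op \<gamma> \<delta> w t\<bar>) \<le> abel_majorant \<delta> w t"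
proof -
  define c where "c = Gamma (1 - \<delta>) * omega1 \<gamma> \<alpha> t"
  have "0 \<le> c"
    using assms by (simp add: c_def omega1_def Gamma_real_pos less_imp_le)
  have "ennreal (Gamma (1 - \<delta>) * \<bar>omega1 \<gamma> \<alpha> t * P_op \<gamma> \<delta> w t\<bar>)
      = ennreal (norm (LINT z:{0<..<t}|lborel. c * (P_kernel \<gamma> \<delta> t z * w z)))"
    using assms \<open>0 \<le> c\<close> by (simp add: c_def P_op_def abs_mult omega1_def mult.assoc)
  also have "\<dots> \<le> (\<integral>\<^sup>+z\<in>{0<..<t}. ennreal (norm (c * (P_kernel \<gamma> \<delta> t z * w z))) \<partial>lborel)"
    by (rule norm_set_integral_le_set_nn_integral)
  also have "\<dots> \<le> abel_majorant \<delta> w t"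
    unfolding abel_majorant_def
  proof (intro nn_integral_mono)
    fix z
    have "c * P_kernel \<gamma> \<delta> t z * \<bar>w z\<bar> \<le> (t - z) powr (-\<delta>) * \<bar>w z\<bar>" if "z \<in> {0<..<t}"
      using omega1_P_kernel_le[of \<gamma> \<delta> \<alpha> z t] assms that
      by (intro mult_right_mono) (simp_all add: c_def Gamma_real_pos field_simps)
    then show "ennreal (norm (c * (P_kernel \<gamma> \<delta> t z * w z))) * indicator {0<..<t} z
        \<le> ennreal ((t - z) powr (-\<delta>) * \<bar>w z\<bar>) * indicator {0<..<t} z"
      using \<open>0 \<le> c\<close> P_kernel_nonneg[OF assms(3,4)] by (simp add: indicator_def abs_mult mult.assoc)
  qed
  finally show ?thesis .
qed

lemma omega1_P_op_L2_le:
  assumes "0 < \<gamma>" "\<gamma> \<le> 1" "0 \<le> \<delta>" "\<delta> < 1" "0 \<le> \<alpha>"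
    and [measurable]: "w \<in> borel_measurable borel"
  shows "(\<integral>\<^sup>+t\<in>{0<..<1}. ennreal (\<bar>omega1 \<gamma> \<alpha> t * P_op \<gamma> \<delta> w t\<bar>\<^sup>2) \<partial>lborel)
           \<le> ennreal (1 / Gamma (1 - \<delta>) ^ 2) * (\<integral>\<^sup>+t\<in>{0<..<1}. abel_majorant \<delta> w t ^ 2 \<partial>lborel)"
proof -
  have \<Gamma>: "0 < Gamma (1 - \<delta>)"
    using assms by (intro Gamma_real_pos) auto
  have "ennreal (\<bar>omega1 \<gamma> \<alpha> t * P_op \<gamma> \<delta> w t\<bar>\<^sup>2) \<le> ennreal (1 / Gamma (1 - \<delta>) ^ 2) * abel_majorant \<delta> w t ^ 2"
    if "t \<in> {0<..<1}" for t
  proof -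
    have "ennreal (\<bar>omega1 \<gamma> \<alpha> t * P_op \<gamma> \<delta> w t\<bar>\<^sup>2)
        = ennreal (1 / Gamma (1 - \<delta>) ^ 2) * ennreal (Gamma (1 - \<delta>) * \<bar>omega1 \<gamma> \<alpha> t * P_op \<gamma> \<delta> w t\<bar>) ^ 2"
      using \<Gamma> by (simp add: ennreal_power ennreal_mult[symmetric] power_mult_distrib)
    also have "\<dots> \<le> ennreal (1 / Gamma (1 - \<delta>) ^ 2) * abel_majorant \<delta> w t ^ 2"
      using assms that by (intro mult_left_mono power_mono Gamma_omega1_P_op_le) auto
    finally show ?thesis .
  qed
  then have "(\<integral>\<^sup>+t\<in>{0<..<1}. ennreal (\<bar>omega1 \<gamma> \<alpha> t * P_op \<gamma> \<delta> w t\<bar>\<^sup>2) \<partial>lborel)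
      \<le> (\<integral>\<^sup>+t. ennreal (1 / Gamma (1 - \<delta>) ^ 2) * (abel_majorant \<delta> w t ^ 2 * indicator {0<..<1} t) \<partial>lborel)"
    by (intro nn_integral_mono) (simp add: indicator_def)
  also have "\<dots> = ennreal (1 / Gamma (1 - \<delta>) ^ 2) * (\<integral>\<^sup>+t\<in>{0<..<1}. abel_majorant \<delta> w t ^ 2 \<partial>lborel)"
    by (rule nn_integral_cmult) measurable
  finally show ?thesis .
qed

lemma P_op_weighted_L2_bound:
  fixes w :: "real \<Rightarrow> real"
  assumes "0 < \<gamma>" "\<gamma> \<le> 1" "0 < \<delta>" "\<delta> < \<alpha>" "\<alpha> < 1"
    and w: "set_borel_measurable borel {0<..<1} w"
  defines "R \<equiv> \<integral>\<^sup>+t\<in>{0<..<1}. ennreal (\<bar>omega2 \<alpha> t * w t\<bar>\<^sup>2) \<partial>lborel"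
  shows "(R < \<infinity> \<longrightarrow> (AE t in lborel. t \<in> {0<..<1} \<longrightarrow> set_integrable lborel {0<..<t} (\<lambda>z. P_kernel \<gamma> \<delta> t z * w z)))
      \<and> (\<integral>\<^sup>+t\<in>{0<..<1}. ennreal (\<bar>omega1 \<gamma> \<alpha> t * P_op \<gamma> \<delta> w t\<bar>\<^sup>2) \<partial>lborel)
            \<le> ennreal (1 / ((\<alpha> - \<delta>) * (1 - \<delta>) * Gamma (1 - \<delta>) ^ 2)) * R"
proof -
  \<comment> \<open>\<open>w\<close> is only measurable on \<open>(0,1)\<close>, which is all that \<open>P_op\<close> sees for \<open>t \<le> 1\<close>.\<close>
  define W where "W = (\<lambda>z. indicator {0<..<1} z * w z)"
  have [measurable]: "W \<in> borel_measurable borel"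
    using w by (simp add: W_def set_borel_measurable_def)
  have "R = (\<integral>\<^sup>+z\<in>{0<..<1}. ennreal ((1 - z) powr (1 - \<alpha>) * (W z)\<^sup>2) \<partial>lborel)"
    unfolding R_def
    by (intro set_nn_integral_cong) (auto simp: W_def omega2_def power_mult_distrib power2_eq_square powr_add[symmetric])
  then have hardy: "(\<integral>\<^sup>+t\<in>{0<..<1}. abel_majorant \<delta> W t ^ 2 \<partial>lborel) \<le> ennreal (1 / ((\<alpha> - \<delta>) * (1 - \<delta>))) * R"
    using assms by (simp add: abel_majorant_weighted_L2_le)
  have P_op_W: "P_op \<gamma> \<delta> W t = P_op \<gamma> \<delta> w t" if "t \<le> 1" for t
    unfolding P_op_def using that by (intro set_lebesgue_integral_cong) (auto simp: W_def)
  have integrable_W: "set_integrable lborel {0<..<t} (\<lambda>z. P_kernel \<gamma> \<delta> t z * W z)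
      \<longleftrightarrow> set_integrable lborel {0<..<t} (\<lambda>z. P_kernel \<gamma> \<delta> t z * w z)" if "t \<le> 1" for t
    using that by (intro set_integrable_cong) (auto simp: W_def)
  show ?thesis
  proof (intro conjI impI)
    assume "R < \<infinity>"
    then have "(\<integral>\<^sup>+t\<in>{0<..<1}. abel_majorant \<delta> W t ^ 2 \<partial>lborel) < \<infinity>"
      using hardy by (simp add: ennreal_mult_less_top order.strict_trans1)
    then have "AE t in lborel. t \<in> {0<..<1} \<longrightarrow> set_integrable lborel {0<..<t} (\<lambda>z. P_kernel \<gamma> \<delta> t z * W z)"
      using assms by (intro AE_set_integrable_P_kernel) auto
    then show "AE t in lborel. t \<in> {0<..<1} \<longrightarrow> set_integrable lborel {0<..<t} (\<lambda>z. P_kernel \<gamma> \<delta> t z * w z)"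
      by eventually_elim (simp add: integrable_W)
  next
    have "(\<integral>\<^sup>+t\<in>{0<..<1}. ennreal (\<bar>omega1 \<gamma> \<alpha> t * P_op \<gamma> \<delta> w t\<bar>\<^sup>2) \<partial>lborel)
        = (\<integral>\<^sup>+t\<in>{0<..<1}. ennreal (\<bar>omega1 \<gamma> \<alpha> t * P_op \<gamma> \<delta> W t\<bar>\<^sup>2) \<partial>lborel)"
      by (intro set_nn_integral_cong) (simp_all add: P_op_W)
    also have "\<dots> \<le> ennreal (1 / Gamma (1 - \<delta>) ^ 2) * (\<integral>\<^sup>+t\<in>{0<..<1}. abel_majorant \<delta> W t ^ 2 \<partial>lborel)"
      using assms by (intro omega1_P_op_L2_le) auto
    also have "\<dots> \<le> ennreal (1 / Gamma (1 - \<delta>) ^ 2) * (ennreal (1 / ((\<alpha> - \<delta>) * (1 - \<delta>))) * R)"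
      using hardy by (rule mult_left_mono) simp
    also have "\<dots> = ennreal (1 / ((\<alpha> - \<delta>) * (1 - \<delta>) * Gamma (1 - \<delta>) ^ 2)) * R"
    proof -
      have "ennreal (1 / ((\<alpha> - \<delta>) * (1 - \<delta>) * Gamma (1 - \<delta>) ^ 2))
          = ennreal (1 / Gamma (1 - \<delta>) ^ 2) * ennreal (1 / ((\<alpha> - \<delta>) * (1 - \<delta>)))"
        using assms by (simp add: ennreal_mult[symmetric] mult.commute)
      then show ?thesis
        by (simp add: mult.assoc)
    qed
    finally show "(\<integral>\<^sup>+t\<in>{0<..<1}. ennreal (\<bar>omega1 \<gamma> \<alpha> t * P_op \<gamma> \<delta> w t\<bar>\<^sup>2) \<partial>lborel)
        \<le> ennreal (1 / ((\<alpha> - \<delta>) * (1 - \<delta>) * Gamma (1 - \<delta>) ^ 2)) * R" .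
  qed
qed

theorem lemma3p3:
  fixes \<gamma> \<delta> \<alpha> :: real
  assumes "0 < \<gamma>" "\<gamma> \<le> 1" "0 < \<delta>" "\<delta> < 1" "\<delta> < \<alpha>" "\<alpha> < 1"
  shows "\<exists>c>0. \<forall>v v' :: real \<Rightarrow> real.
           (\<forall>t\<in>{0<..<1}. (v has_real_derivative v' t) (at t)) \<longrightarrow>
           ((\<integral>\<^sup>+ t\<in>{0<..<1}. ennreal (\<bar>omega2 \<alpha> t * v' t\<bar>\<^sup>2) \<partial>lborel) < \<infinity> \<longrightarrow>
              (AE t in lborel. t \<in> {0<..<1} \<longrightarrow>
                 set_integrable lborel {0<..<t} (\<lambda>z. P_kernel \<gamma> \<delta> t z * v' z)))
           \<and> (\<integral>\<^sup>+ t\<in>{0<..<1}. ennreal (\<bar>omega1 \<gamma> \<alpha> t * P_op \<gamma> \<delta> v' t\<bar>\<^sup>2) \<partial>lborel)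
               \<le> ennreal c * (\<integral>\<^sup>+ t\<in>{0<..<1}. ennreal (\<bar>omega2 \<alpha> t * v' t\<bar>\<^sup>2) \<partial>lborel)"
proof -
  have "0 < Gamma (1 - \<delta>)"
    using assms by (intro Gamma_real_pos) auto
  then have "0 < 1 / ((\<alpha> - \<delta>) * (1 - \<delta>) * Gamma (1 - \<delta>) ^ 2)"
    using assms by (intro divide_pos_pos mult_pos_pos zero_less_power) auto
  then show ?thesis
    using P_op_weighted_L2_bound[OF assms(1-3,5,6) set_borel_measurable_derivative] by blast
qed

end
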